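(* Let $p$ be a prime number, $N\ge 1$ and $n\ge 0$ integers, and $t=\mathrm{ord}_p(N-1)$. Then $$\prod_{k=0}^{n}\frac{(N+k)!}{N!}\,B_{N,n}\equiv \prod_{k=0}^{n}(1+k)!\ B_n \pmod{p^t}.$$
   Context: For a positive integer $N$, the hypergeometric Bernoulli numbers $B_{N,n}$ are defined by $\frac{x^N/N!}{e^x-\sum_{n=0}^{N-1}x^n/n!}=\sum_{n\ge0} B_{N,n}\frac{x^n}{n!}$, and the classical Bernoulli numbers $B_n$ by $\frac{x}{e^x-1}=\sum_{n\ge0}B_n\frac{x^n}{n!}$ (so $B_n=B_{1,n}$). $\mathrm{ord}_p$ denotes the $p$-adic valuation on $\mathbb{Q}$ (with $\mathrm{ord}_p(0)=\infty$); for rationals $a,b$, $a\equiv b\pmod{p^t}$ means $\mathrm{ord}_p(a-b)\ge t$. *)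

theory Defs
  imports "HOL-Computational_Algebra.Computational_Algebra" "HOL-Library.Extended_Nat"
begin

definition hyp_bernoulli :: "nat \<Rightarrow> nat \<Rightarrow> rat" where
  "hyp_bernoulli N n = fact n * fps_nth
     ((fps_const (1 / fact N) * fps_X ^ N) /
      (fps_exp 1 - (\<Sum>k<N. fps_const (1 / fact k) * fps_X ^ k))) n"

definition bernoulli_num :: "nat \<Rightarrow> rat" where
  "bernoulli_num n = fact n * fps_nth (fps_X / (fps_exp 1 - 1)) n"

text \<open>p-adic valuation of a nonzero rational (value irrelevant at 0).\<close>
definition padic_ord :: "nat \<Rightarrow> rat \<Rightarrow> int" where
  "padic_ord p q = (case quotient_of q of (a, b) \<Rightarrow>
      int (multiplicity (int p) a) - int (multiplicity (int p) b))"

definition nat_ord :: "nat \<Rightarrow> nat \<Rightarrow> enat" where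
  "nat_ord p m = (if m = 0 then \<infinity> else enat (multiplicity p m))"

definition rat_cong :: "nat \<Rightarrow> enat \<Rightarrow> rat \<Rightarrow> rat \<Rightarrow> bool" where
  "rat_cong p t a b \<longleftrightarrow> a = b \<or> (\<exists>m. t = enat m \<and> int m \<le> padic_ord p (a - b))"

end

theory Submission
  imports Defs "HOL-Number_Theory.Number_Theory"
begin

text \<open>
  Multiplying the generating function of the B_{N,n} by its denominator divided by x^N,
  i.e. by the series of the 1/(N+j)!, gives the constant 1/N!. Comparing coefficients yields
  a recurrence expressing B_{N,n} through B_{N,0}, ..., B_{N,n-1}. After scaling B_{N,n} by
  prod_{k\<le>n} (N+k)!/N! the recurrence has integer coefficients, each a product of factors
  N + l, so the scaled numbers are integers and, by induction on n, depend on N only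
  modulo M - N for any other M. Comparing N with M = 1, where B_{1,n} = B_n, gives the
  congruence modulo N - 1 and hence modulo every p^t dividing it.
\<close>

lemma hyp_bernoulli_convolution:
  fixes N n :: nat
  shows "(\<Sum>i=0..n. hyp_bernoulli N i / (fact i * fact (N + (n - i)))) =
           (if n = 0 then 1 / fact N else 0)"
proof -
  define G :: "rat fps" where "G = Abs_fps (\<lambda>j. 1 / fact (N + j))"
  define T :: "rat fps" where "T = (\<Sum>k<N. fps_const (1 / fact k) * fps_X ^ k)"
  define H :: "rat fps" where "H = (fps_const (1 / fact N) * fps_X ^ N) / (fps_exp 1 - T)"
  have T_nth: "T $ m = (if m < N then 1 / fact m else 0)" for m
  proof -
    have "T $ m = (\<Sum>k<N. if m = k then 1 / fact k else 0)"
      unfolding T_def fps_sum_nth by (intro sum.cong) auto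
    thus ?thesis by (simp add: sum.delta)
  qed
  have denominator: "fps_exp 1 - T = fps_X ^ N * G"
    by (rule fps_ext) (auto simp: T_nth fps_X_power_mult_nth G_def)
  have "G $ 0 \<noteq> 0" by (simp add: G_def)
  have "H = (fps_X ^ N * fps_const (1 / fact N)) / (fps_X ^ N * G)"
    unfolding H_def denominator by (simp add: mult.commute)
  also have "\<dots> = fps_const (1 / fact N) / G"
    by (rule div_mult_mult1) simp
  finally have "H * G = fps_const (1 / fact N)"
    using \<open>G $ 0 \<noteq> 0\<close> by (simp add: fps_divide_unit inverse_mult_eq_1 mult.assoc)
  hence "(H * G) $ n = (if n = 0 then 1 / fact N else 0)" by simp
  moreover have "H $ i = hyp_bernoulli N i / fact i" for i
    unfolding hyp_bernoulli_def H_def T_def by simp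
  ultimately show ?thesis
    by (simp add: fps_mult_nth G_def divide_simps)
qed

lemma bernoulli_num_eq_hyp_bernoulli_1: "bernoulli_num n = hyp_bernoulli 1 n"
  unfolding bernoulli_num_def hyp_bernoulli_def by simp

definition fact_quotient :: "nat \<Rightarrow> nat \<Rightarrow> nat \<Rightarrow> nat" where
  "fact_quotient N a b = (\<Prod>l\<in>{a<..b}. N + l)"

lemma fact_quotient_trans:
  assumes "a \<le> b" "b \<le> c"
  shows "fact_quotient N a c = fact_quotient N a b * fact_quotient N b c"
proof -
  have "{a<..c} = {a<..b} \<union> {b<..c}" using assms by auto
  thus ?thesis unfolding fact_quotient_def by (simp add: prod.union_disjoint)
qed

lemma fact_eq_fact_mult_fact_quotient:
  "a \<le> b \<Longrightarrow> fact (N + b) = (fact (N + a) :: nat) * fact_quotient N a b"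
proof (induction b)
  case 0
  thus ?case by (simp add: fact_quotient_def)
next
  case (Suc b)
  show ?case
  proof (cases "a = Suc b")
    case True
    thus ?thesis by (simp add: fact_quotient_def)
  next
    case False
    hence "a \<le> b" using Suc.prems by simp
    hence "{a<..Suc b} = insert (Suc b) {a<..b}" by auto
    hence "fact_quotient N a (Suc b) = fact_quotient N a b * (N + Suc b)"
      by (simp add: fact_quotient_def)
    thus ?thesis using Suc.IH[OF \<open>a \<le> b\<close>] by (simp add: algebra_simps)
  qed
qed

lemma of_nat_fact_quotient:
  "(of_nat (fact_quotient N 0 k) :: 'a :: field_char_0) = fact (N + k) / fact N"
proof -
  have "(fact (N + k) :: nat) = fact N * fact_quotient N 0 k"
    using fact_eq_fact_mult_fact_quotient[of 0 k N] by simp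
  hence "(fact (N + k) :: 'a) = fact N * of_nat (fact_quotient N 0 k)"
    by (metis of_nat_fact of_nat_mult)
  thus ?thesis by simp
qed

lemma fact_quotient_cong:
  assumes "N \<le> M"
  shows "[fact_quotient M a b = fact_quotient N a b] (mod M - N)"
  unfolding fact_quotient_def
proof (rule cong_prod)
  fix l
  have shift: "M + l = (N + l) + (M - N)" using assms by simp
  have "[(N + l) + (M - N) = N + l] (mod M - N)"
    unfolding cong_def by (rule mod_add_self2)
  thus "[M + l = N + l] (mod M - N)" by (subst shift)
qed

definition bernoulli_scale :: "nat \<Rightarrow> nat \<Rightarrow> nat" where
  "bernoulli_scale N n = (\<Prod>k=0..n. fact_quotient N 0 k)"

definition scaled_hyp_bernoulli :: "nat \<Rightarrow> nat \<Rightarrow> rat" where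
  "scaled_hyp_bernoulli N n = of_nat (bernoulli_scale N n) * hyp_bernoulli N n"

definition recurrence_coeff :: "nat \<Rightarrow> nat \<Rightarrow> nat \<Rightarrow> nat" where
  "recurrence_coeff N n i =
     fact_quotient 0 i n * fact_quotient N (n - i) n * (\<Prod>k\<in>{i<..<n}. fact_quotient N 0 k)"

lemma recurrence_coeff_cong:
  "N \<le> M \<Longrightarrow> [recurrence_coeff M n i = recurrence_coeff N n i] (mod M - N)"
  unfolding recurrence_coeff_def by (intro cong_mult cong_refl cong_prod fact_quotient_cong)

lemma bernoulli_scale_factorization:
  assumes "i < n"
  shows "bernoulli_scale N n * fact n * fact N =
           recurrence_coeff N n i * bernoulli_scale N i * fact i * fact (N + (n - i))"
proof -
  have "{0..n} = {0..i} \<union> {i<..n}" using assms by auto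
  hence "bernoulli_scale N n = bernoulli_scale N i * (\<Prod>k\<in>{i<..n}. fact_quotient N 0 k)"
    unfolding bernoulli_scale_def by (simp add: prod.union_disjoint ivl_disj_int_two)
  moreover have "{i<..n} = insert n {i<..<n}" using assms by auto
  ultimately have scale: "bernoulli_scale N n =
      bernoulli_scale N i * fact_quotient N 0 n * (\<Prod>k\<in>{i<..<n}. fact_quotient N 0 k)"
    by (simp add: mult.assoc)
  have "fact n = fact i * fact_quotient 0 i n"
    using fact_eq_fact_mult_fact_quotient[of i n 0] assms by simp
  moreover have "fact (N + (n - i)) = fact N * fact_quotient N 0 (n - i)"
    using fact_eq_fact_mult_fact_quotient[of 0 "n - i" N] by simp
  moreover have "fact_quotient N 0 n = fact_quotient N 0 (n - i) * fact_quotient N (n - i) n"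
    using fact_quotient_trans[of 0 "n - i" n N] by simp
  ultimately show ?thesis
    unfolding scale recurrence_coeff_def by (simp add: ac_simps)
qed

lemma scaled_hyp_bernoulli_0: "scaled_hyp_bernoulli N 0 = 1"
  using hyp_bernoulli_convolution[of N 0]
  by (simp add: scaled_hyp_bernoulli_def bernoulli_scale_def fact_quotient_def)

lemma scaled_hyp_bernoulli_rec:
  assumes "n > 0"
  shows "scaled_hyp_bernoulli N n =
           - (\<Sum>i<n. of_nat (recurrence_coeff N n i) * scaled_hyp_bernoulli N i)"
proof -
  define c where "c = (of_nat (bernoulli_scale N n) * (fact n * fact N) :: rat)"
  have "(\<Sum>i\<le>n. hyp_bernoulli N i / (fact i * fact (N + (n - i)))) = 0"
    using hyp_bernoulli_convolution[of N n] assms by (simp add: atLeast0AtMost)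
  hence "hyp_bernoulli N n / (fact n * fact N) =
           - (\<Sum>i<n. hyp_bernoulli N i / (fact i * fact (N + (n - i))))"
    using assms by (cases n) (simp_all add: lessThan_Suc_atMost[symmetric] add_eq_0_iff)
  hence "scaled_hyp_bernoulli N n =
           - (\<Sum>i<n. c * (hyp_bernoulli N i / (fact i * fact (N + (n - i)))))"
    unfolding scaled_hyp_bernoulli_def c_def by (simp add: field_simps sum_distrib_left)
  also have "\<dots> = - (\<Sum>i<n. of_nat (recurrence_coeff N n i) * scaled_hyp_bernoulli N i)"
  proof (intro arg_cong[where f = uminus] sum.cong refl)
    fix i assume "i \<in> {..<n}"
    hence "c = of_nat (recurrence_coeff N n i * bernoulli_scale N i * fact i * fact (N + (n - i)))"
      unfolding c_def using bernoulli_scale_factorization[of i n N]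
      by (metis lessThan_iff of_nat_fact of_nat_mult mult.assoc)
    thus "c * (hyp_bernoulli N i / (fact i * fact (N + (n - i)))) =
            of_nat (recurrence_coeff N n i) * scaled_hyp_bernoulli N i"
      unfolding scaled_hyp_bernoulli_def by (simp add: field_simps)
  qed
  finally show ?thesis .
qed

lemma scaled_hyp_bernoulli_int_cong:
  assumes "N \<le> M"
  shows "\<exists>z w. scaled_hyp_bernoulli M n = of_int z \<and> scaled_hyp_bernoulli N n = of_int w \<and>
               [z = w] (mod int (M - N))"
proof (induction n rule: less_induct)
  case (less n)
  show ?case
  proof (cases "n = 0")
    case True
    thus ?thesis by (intro exI[of _ 1]) (simp add: scaled_hyp_bernoulli_0)
  next
    case False
    obtain z w where zw: "\<And>i. i < n \<Longrightarrow> scaled_hyp_bernoulli M i = of_int (z i) \<and>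
        scaled_hyp_bernoulli N i = of_int (w i) \<and> [z i = w i] (mod int (M - N))"
      using less by metis
    have "scaled_hyp_bernoulli M n = of_int (- (\<Sum>i<n. int (recurrence_coeff M n i) * z i))"
      using scaled_hyp_bernoulli_rec[of n M] False zw by simp
    moreover have "scaled_hyp_bernoulli N n = of_int (- (\<Sum>i<n. int (recurrence_coeff N n i) * w i))"
      using scaled_hyp_bernoulli_rec[of n N] False zw by simp
    moreover have "[- (\<Sum>i<n. int (recurrence_coeff M n i) * z i) =
                    - (\<Sum>i<n. int (recurrence_coeff N n i) * w i)] (mod int (M - N))"
    proof (intro cong_minus_minus_iff[THEN iffD2] cong_sum cong_mult)
      fix i assume "i \<in> {..<n}"
      thus "[z i = w i] (mod int (M - N))" using zw by simp
      show "[int (recurrence_coeff M n i) = int (recurrence_coeff N n i)] (mod int (M - N))"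
        using recurrence_coeff_cong[OF assms] by (simp add: cong_int_iff)
    qed
    ultimately show ?thesis by blast
  qed
qed

lemma rat_cong_of_int_cong:
  assumes "prime p" and "[z = w] (mod int d)"
  shows "rat_cong p (nat_ord p d) (of_int z) (of_int w)"
proof (cases "z = w")
  case True
  thus ?thesis by (simp add: rat_cong_def)
next
  case False
  hence "d \<noteq> 0"
    using assms(2) by (metis cong_iff_dvd_diff dvd_0_left_iff of_nat_0 right_minus_eq)
  define m where "m = multiplicity p d"
  have "int p ^ m dvd int d"
    unfolding m_def by (metis multiplicity_dvd of_nat_dvd_iff of_nat_power)
  also have "int d dvd z - w" using assms(2) by (simp add: cong_iff_dvd_diff)
  finally have "int p ^ m dvd z - w" .
  moreover have "\<not> is_unit (int p)" using assms(1) by auto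
  ultimately have "m \<le> multiplicity (int p) (z - w)"
    using False by (intro multiplicity_geI) auto
  hence "int m \<le> padic_ord p (of_int z - of_int w)"
    unfolding padic_ord_def by (simp flip: of_int_diff)
  moreover have "nat_ord p d = enat m" unfolding nat_ord_def m_def using \<open>d \<noteq> 0\<close> by simp
  ultimately show ?thesis unfolding rat_cong_def by blast
qed

theorem lemma1:
  fixes p N n :: nat
  assumes "prime p" and "N \<ge> 1"
  shows "rat_cong p (nat_ord p (N - 1))
           ((\<Prod>k=0..n. (fact (N + k) / fact N :: rat)) * hyp_bernoulli N n)
           ((\<Prod>k=0..n. (fact (1 + k) :: rat)) * bernoulli_num n)"
proof -
  have scaled: "(\<Prod>k=0..n. (fact (M + k) / fact M :: rat)) * hyp_bernoulli M n =
                  scaled_hyp_bernoulli M n" for M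
    by (simp add: scaled_hyp_bernoulli_def bernoulli_scale_def of_nat_fact_quotient)
  have "(\<Prod>k=0..n. (fact (1 + k) :: rat)) * bernoulli_num n = scaled_hyp_bernoulli 1 n"
    using scaled[of 1] by (simp add: bernoulli_num_eq_hyp_bernoulli_1)
  moreover obtain z w where "scaled_hyp_bernoulli N n = of_int z" "scaled_hyp_bernoulli 1 n = of_int w"
      "[z = w] (mod int (N - 1))"
    using scaled_hyp_bernoulli_int_cong[OF assms(2), of n] by blast
  ultimately show ?thesis
    using scaled[of N] rat_cong_of_int_cong[OF assms(1)] by metis
qed

end
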